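(* Let $\Gamma=\langle V,(w_u)_{u\in V},\alpha,\beta\rangle$ be a star celebrity game with $\beta>1$. If $T$ is a Nash equilibrium graph of $\Gamma$ that is a tree, then $\mathrm{diam}(T)\le\beta+1$.
   Context: A celebrity game $\Gamma=\langle V,(w_u)_{u\in V},\alpha,\beta\rangle$ consists of a set of players $V=\{1,\dots,n\}$, celebrity weights $w_u>0$, a link cost $\alpha>0$ and a critical distance $\beta$ with $1\le\beta\le n-1$. A strategy of player $u$ is a set $S_u\subseteq V\setminus\{u\}$; a strategy profile is $S=(S_1,\dots,S_n)$; its outcome graph $G[S]$ is the undirected graph on $V$ with edge set $\{\{u,v\}: u\in S_v\text{ or }v\in S_u\}$. With $d_G$ the graph distance (infinite between different connected components), the cost of player $u$ is $c_u(S)=\alpha|S_u|+\sum_{v:\,d_{G[S]}(u,v)>\beta}w_v$. $S$ is a Nash equilibrium if no player can strictly decrease its cost by changing only its own strategy; a graph $G$ is a Nash equilibrium graph if $G=G[S]$ for some Nash equilibrium $S$. $\Gamma$ is a star celebrity game if it has a Nash equilibrium graph that is connected. $\mathrm{diam}(T)=\max_{u,v}d_T(u,v)$. *)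

theory Defs
  imports Complex_Main
begin

(* Players are V = {1..n}.  A graph on V is given by its edge set E :: nat set set,
   each edge being a 2-element set {u,v}. *)

definition players :: "nat \<Rightarrow> nat set" where
  "players n = {1..n}"

definition outcome :: "nat \<Rightarrow> (nat \<Rightarrow> nat set) \<Rightarrow> nat set set" where
  "outcome n S = {{u, v} | u v. u \<in> players n \<and> v \<in> players n \<and> (u \<in> S v \<or> v \<in> S u)}"

definition is_walk :: "nat set set \<Rightarrow> nat list \<Rightarrow> bool" where
  "is_walk E xs \<longleftrightarrow> xs \<noteq> [] \<and> (\<forall>i < length xs - 1. {xs ! i, xs ! (i+1)} \<in> E)"

(* d_G(u,v) \<le> k  (length of a walk = number of edges = length xs - 1) *)
definition dist_le :: "nat set set \<Rightarrow> nat \<Rightarrow> nat \<Rightarrow> nat \<Rightarrow> bool" where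
  "dist_le E u v k \<longleftrightarrow> (\<exists>xs. is_walk E xs \<and> hd xs = u \<and> last xs = v \<and> length xs \<le> k + 1)"

definition connected_graph :: "nat set \<Rightarrow> nat set set \<Rightarrow> bool" where
  "connected_graph V E \<longleftrightarrow> (\<forall>u\<in>V. \<forall>v\<in>V. \<exists>k. dist_le E u v k)"

definition has_cycle :: "nat set set \<Rightarrow> bool" where
  "has_cycle E \<longleftrightarrow> (\<exists>xs. length xs \<ge> 3 \<and> distinct xs \<and> is_walk E xs \<and> {last xs, hd xs} \<in> E)"

definition is_tree :: "nat set \<Rightarrow> nat set set \<Rightarrow> bool" where
  "is_tree V E \<longleftrightarrow> connected_graph V E \<and> \<not> has_cycle E"

definition diam_le :: "nat set \<Rightarrow> nat set set \<Rightarrow> nat \<Rightarrow> bool" where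
  "diam_le V E D \<longleftrightarrow> (\<forall>u\<in>V. \<forall>v\<in>V. dist_le E u v D)"

definition strategy_profile :: "nat \<Rightarrow> (nat \<Rightarrow> nat set) \<Rightarrow> bool" where
  "strategy_profile n S \<longleftrightarrow> (\<forall>u\<in>players n. S u \<subseteq> players n - {u})"

definition cost :: "nat \<Rightarrow> (nat \<Rightarrow> real) \<Rightarrow> real \<Rightarrow> nat \<Rightarrow> (nat \<Rightarrow> nat set) \<Rightarrow> nat \<Rightarrow> real" where
  "cost n w \<alpha> \<beta> S u = \<alpha> * real (card (S u))
     + (\<Sum>v\<in>{v \<in> players n. \<not> dist_le (outcome n S) u v \<beta>}. w v)"

definition nash_eq :: "nat \<Rightarrow> (nat \<Rightarrow> real) \<Rightarrow> real \<Rightarrow> nat \<Rightarrow> (nat \<Rightarrow> nat set) \<Rightarrow> bool" where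
  "nash_eq n w \<alpha> \<beta> S \<longleftrightarrow> strategy_profile n S \<and>
     (\<forall>u\<in>players n. \<forall>Su'. Su' \<subseteq> players n - {u} \<longrightarrow>
        cost n w \<alpha> \<beta> S u \<le> cost n w \<alpha> \<beta> (S(u := Su')) u)"

definition NE_graph :: "nat \<Rightarrow> (nat \<Rightarrow> real) \<Rightarrow> real \<Rightarrow> nat \<Rightarrow> nat set set \<Rightarrow> bool" where
  "NE_graph n w \<alpha> \<beta> E \<longleftrightarrow> (\<exists>S. nash_eq n w \<alpha> \<beta> S \<and> outcome n S = E)"

definition celebrity_game :: "nat \<Rightarrow> (nat \<Rightarrow> real) \<Rightarrow> real \<Rightarrow> nat \<Rightarrow> bool" where
  "celebrity_game n w \<alpha> \<beta> \<longleftrightarrow> (\<forall>u\<in>players n. w u > 0) \<and> \<alpha> > 0 \<and> 1 \<le> \<beta> \<and> \<beta> \<le> n - 1"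

definition star_celebrity_game :: "nat \<Rightarrow> (nat \<Rightarrow> real) \<Rightarrow> real \<Rightarrow> nat \<Rightarrow> bool" where
  "star_celebrity_game n w \<alpha> \<beta> \<longleftrightarrow> celebrity_game n w \<alpha> \<beta> \<and>
     (\<exists>E. NE_graph n w \<alpha> \<beta> E \<and> connected_graph (players n) E)"

end

theory Submission
  imports Defs
begin

text \<open>
  Suppose a tree equilibrium T had diameter greater than \<open>\<beta> + 1\<close>. By acyclicity, the
  endpoints u, v of a longest path are leaves, attached to x and y say, and
  \<open>d(u, v) > \<beta> + 1\<close>. If x had bought the edge \<open>{u, x}\<close>, dropping it would cut x off
  only from u, so \<open>\<alpha> \<le> w u\<close>; but v, by buying an edge to u, would bring both u and x
  within distance \<open>\<beta>\<close>, so \<open>w u + w x \<le> \<alpha>\<close>. Hence u bought its edge, and likewise v.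
  Re-hanging u from x to y must not pay off, so the players farther than \<open>\<beta> - 1\<close> from y
  outweigh those farther than \<open>\<beta> - 1\<close> from x by at least \<open>w u\<close>; the same argument for v
  gives the reverse inequality with \<open>w v\<close>, a contradiction.
\<close>

lemma is_walk_Nil [simp]: "\<not> is_walk E []"
  by (simp add: is_walk_def)

lemma is_walk_singleton [simp]: "is_walk E [x]"
  by (simp add: is_walk_def)

lemma is_walk_Cons_Cons [simp]:
  "is_walk E (x # y # xs) \<longleftrightarrow> {x, y} \<in> E \<and> is_walk E (y # xs)"
  by (auto simp: is_walk_def less_Suc_eq_0_disj)

lemma is_walk_append:
  "is_walk E (xs @ y # ys) \<longleftrightarrow> is_walk E (xs @ [y]) \<and> is_walk E (y # ys)"
proof (induction xs)
  case (Cons x xs)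
  then show ?case by (cases xs) auto
qed simp

lemma is_walk_rev: "is_walk E xs \<Longrightarrow> is_walk E (rev xs)"
proof (induction xs rule: induct_list012)
  case (3 x y xs)
  then show ?case
    using is_walk_append[of E "rev xs" y "[x]"] by (simp add: insert_commute)
qed simp_all

lemma is_walk_mono:
  assumes "is_walk E xs"
    and "\<And>a b. {a, b} \<in> E \<Longrightarrow> a \<in> set xs \<Longrightarrow> b \<in> set xs \<Longrightarrow> {a, b} \<in> E'"
  shows "is_walk E' xs"
  using assms by (induction xs rule: induct_list012) auto

lemma is_walk_join:
  assumes "is_walk E xs" "is_walk E ys" "last xs = hd ys"
  shows "is_walk E (xs @ tl ys)" "hd (xs @ tl ys) = hd xs" "last (xs @ tl ys) = last ys"
    "set (xs @ tl ys) \<subseteq> set xs \<union> set ys"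
proof -
  obtain a x where xs: "xs = a @ [x]"
    using assms(1) by (cases xs rule: rev_cases) auto
  obtain c where ys: "ys = x # c"
    using assms(2,3) xs by (cases ys) auto
  show "is_walk E (xs @ tl ys)"
    using assms(1,2) is_walk_append[of E a x c] unfolding xs ys by simp
  show "hd (xs @ tl ys) = hd xs"
    unfolding xs ys by (cases a) simp_all
  show "last (xs @ tl ys) = last ys"
    unfolding xs ys by (cases c) simp_all
  show "set (xs @ tl ys) \<subseteq> set xs \<union> set ys"
    using ys by auto
qed

lemma is_walk_shortcut:
  "is_walk E xs \<Longrightarrow> \<exists>ys. is_walk E ys \<and> distinct ys \<and> hd ys = hd xs \<and> last ys = last xs
      \<and> set ys \<subseteq> set xs \<and> length ys \<le> length xs"
proof (induction xs rule: length_induct)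
  case (1 xs)
  show ?case
  proof (cases "distinct xs")
    case True
    then show ?thesis using "1.prems" by blast
  next
    case False
    then obtain a y b c where xs: "xs = a @ [y] @ b @ [y] @ c"
      using not_distinct_decomp by blast
    have "is_walk E (a @ [y])" "is_walk E ((y # b) @ y # c)"
      using "1.prems" is_walk_append[of E a y "b @ y # c"] unfolding xs by simp_all
    then have "is_walk E (a @ y # c)"
      using is_walk_append[of E a y c] is_walk_append[of E "y # b" y c] by simp
    moreover have "length (a @ y # c) < length xs"
      using xs by simp
    ultimately obtain ys where ys: "is_walk E ys" "distinct ys" "hd ys = hd (a @ y # c)"
      "last ys = last (a @ y # c)" "set ys \<subseteq> set (a @ y # c)" "length ys \<le> length (a @ y # c)"
      using "1.IH" by blast
    have "hd (a @ y # c) = hd xs" "last (a @ y # c) = last xs"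
      unfolding xs by (cases a; simp)+
    moreover have "set (a @ y # c) \<subseteq> set xs" "length (a @ y # c) \<le> length xs"
      using xs by auto
    ultimately show ?thesis
      using ys by (metis order.trans)
  qed
qed

lemma dist_le_geodesic:
  assumes "dist_le E u v k"
  obtains xs where "is_walk E xs" "distinct xs" "hd xs = u" "last xs = v" "length xs \<le> k + 1"
  using assms is_walk_shortcut unfolding dist_le_def by (meson order.trans)

lemma dist_le_refl [simp]: "dist_le E u u k"
  unfolding dist_le_def by (intro exI[of _ "[u]"]) simp

lemma dist_le_mono: "dist_le E u v k \<Longrightarrow> k \<le> k' \<Longrightarrow> dist_le E u v k'"
  unfolding dist_le_def by fastforce

lemma dist_le_sym: "dist_le E u v k \<Longrightarrow> dist_le E v u k"
  unfolding dist_le_def by (metis hd_rev last_rev length_rev is_walk_rev)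

lemma dist_le_Cons_edge:
  assumes uv: "{u, v} \<in> E" and "dist_le E v t k"
  shows "dist_le E u t (Suc k)"
proof -
  obtain ys where ys: "is_walk E ys" "hd ys = v" "last ys = t" "length ys \<le> k + 1"
    using assms(2) unfolding dist_le_def by blast
  then obtain xs where "ys = v # xs"
    by (cases ys) auto
  with ys have xs: "is_walk E (v # xs)" "last (v # xs) = t" "length xs \<le> k"
    by simp_all
  then show ?thesis
    unfolding dist_le_def using uv by (intro exI[of _ "u # v # xs"]) simp
qed

lemma dist_le_edge: "{u, v} \<in> E \<Longrightarrow> dist_le E u v (Suc 0)"
  using dist_le_Cons_edge[of u v E v 0] by simp

lemma dist_le_subset: "dist_le E u v k \<Longrightarrow> E \<subseteq> E' \<Longrightarrow> dist_le E' u v k"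
  unfolding dist_le_def using is_walk_mono by blast

definition graph_dist :: "nat set set \<Rightarrow> nat \<Rightarrow> nat \<Rightarrow> nat" where
  "graph_dist E u v = (LEAST k. dist_le E u v k)"

lemma dist_le_graph_dist: "dist_le E u v k \<Longrightarrow> dist_le E u v (graph_dist E u v)"
  unfolding graph_dist_def by (rule LeastI)

lemma graph_dist_le: "dist_le E u v k \<Longrightarrow> graph_dist E u v \<le> k"
  unfolding graph_dist_def by (rule Least_le)

lemma graph_dist_sym: "dist_le E u v k \<Longrightarrow> graph_dist E u v = graph_dist E v u"
  by (meson antisym dist_le_graph_dist dist_le_sym graph_dist_le)

definition leaf :: "nat set set \<Rightarrow> nat \<Rightarrow> nat \<Rightarrow> bool" where
  "leaf E u x \<longleftrightarrow> {u, x} \<in> E \<and> (\<forall>y. {u, y} \<in> E \<longrightarrow> y = x)"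

lemma leaf_not_inner:
  assumes "is_walk E xs" "distinct xs" "leaf E u x" "hd xs \<noteq> u" "last xs \<noteq> u"
  shows "u \<notin> set xs"
proof
  assume "u \<in> set xs"
  then obtain a b where xs: "xs = a @ u # b"
    by (meson split_list)
  obtain a' p where "a = a' @ [p]"
    using assms(4) xs by (cases a rule: rev_cases) auto
  moreover obtain q b' where "b = q # b'"
    using assms(5) xs by (cases b) auto
  ultimately have xs': "xs = a' @ p # u # q # b'"
    using xs by simp
  then have "{u, p} \<in> E" "{u, q} \<in> E"
    using assms(1) is_walk_append[of E a' p "u # q # b'"] by (simp_all add: insert_commute)
  moreover have "p \<noteq> q"
    using assms(2) xs' by auto
  ultimately show False
    using assms(3) unfolding leaf_def by blast
qed

lemma dist_le_avoiding_leaf: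
  assumes "dist_le E x t k" "leaf E u y" "x \<noteq> u" "t \<noteq> u"
    and "\<And>a b. {a, b} \<in> E \<Longrightarrow> a \<noteq> u \<Longrightarrow> b \<noteq> u \<Longrightarrow> {a, b} \<in> E'"
  shows "dist_le E' x t k"
proof -
  obtain xs where xs: "is_walk E xs" "distinct xs" "hd xs = x" "last xs = t" "length xs \<le> k + 1"
    using assms(1) by (rule dist_le_geodesic)
  have "u \<notin> set xs"
    using leaf_not_inner xs assms(2-4) by blast
  then have "is_walk E' xs"
    using is_walk_mono[OF xs(1)] assms(5) by metis
  then show ?thesis
    unfolding dist_le_def using xs by blast
qed

lemma dist_le_from_leaf:
  assumes "dist_le E u t (Suc k)" "leaf E u x" "t \<noteq> u"
  shows "dist_le E x t k"
proof -
  obtain xs where xs: "is_walk E xs" "hd xs = u" "last xs = t" "length xs \<le> k + 2"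
    using assms(1) unfolding dist_le_def by auto
  then obtain y ys where "xs = u # y # ys"
    using assms(3) by (cases xs rule: remdups_adj.cases) auto
  moreover from this have "y = x"
    using xs(1) assms(2) unfolding leaf_def by simp
  ultimately show ?thesis
    unfolding dist_le_def using xs by (intro exI[of _ "y # ys"]) auto
qed

lemma acyclic_no_detour:
  assumes "\<not> has_cycle E" "{u, p} \<in> E" "{u, q} \<in> E" "p \<noteq> q"
    and "is_walk E xs" "hd xs = p" "last xs = q" "u \<notin> set xs"
  shows False
proof -
  obtain ys where ys: "is_walk E ys" "distinct ys" "hd ys = p" "last ys = q" "u \<notin> set ys"
    using is_walk_shortcut[OF assms(5)] assms(6-8) by blast
  then obtain y ys' where ys': "ys = p # y # ys'"
    using assms(4) by (cases ys rule: remdups_adj.cases) auto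
  have "length (u # ys) \<ge> 3" "distinct (u # ys)" "is_walk E (u # ys)"
    using ys ys' assms(2) by simp_all
  moreover have "{last (u # ys), hd (u # ys)} \<in> E"
    using ys(4) ys' assms(3) by (simp add: insert_commute)
  ultimately show False
    using assms(1) unfolding has_cycle_def by blast
qed

lemma not_inner_of_short_walk:
  assumes "is_walk E xs" "hd xs = v" "last xs \<noteq> u" "length xs \<le> graph_dist E v u + 1"
  shows "u \<notin> set xs"
proof
  assume "u \<in> set xs"
  then obtain a b where xs: "xs = a @ u # b"
    by (meson split_list)
  have "is_walk E (a @ [u])"
    using assms(1) is_walk_append unfolding xs by blast
  moreover have "hd (a @ [u]) = v"
    using assms(2) xs by (cases a) auto
  ultimately have "dist_le E v u (length a)"
    unfolding dist_le_def by (intro exI[of _ "a @ [u]"]) simp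
  moreover have "b \<noteq> []"
    using assms(3) xs by auto
  ultimately show False
    using graph_dist_le[of E v u "length a"] assms(4) unfolding xs by (cases b) simp_all
qed

lemma eccentric_vertex_leaf:
  assumes acyclic: "\<not> has_cycle E"
    and edges: "\<Union>E \<subseteq> P" and loops: "\<forall>a. {a} \<notin> E"
    and conn: "connected_graph P E" and "u \<in> P" "v \<in> P" "u \<noteq> v"
    and eccentric: "\<And>z. z \<in> P \<Longrightarrow> graph_dist E v z \<le> graph_dist E v u"
  obtains x where "leaf E u x"
proof -
  define m where "m = graph_dist E v u"
  have reach: "dist_le E v z m" if "z \<in> P" for z
    using conn \<open>v \<in> P\<close> that dist_le_graph_dist dist_le_mono eccentric
    unfolding connected_graph_def m_def by blast
  obtain W where W: "is_walk E W" "distinct W" "hd W = v" "last W = u" "length W \<le> m + 1"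
    using reach[OF \<open>u \<in> P\<close>] by (rule dist_le_geodesic)
  obtain W' where W': "W = W' @ [u]"
    using W(1,4) by (cases W rule: rev_cases) auto
  then obtain B q where Bq: "W' = B @ [q]"
    using W(3) \<open>u \<noteq> v\<close> by (cases W' rule: rev_cases) auto
  then have walk_W': "is_walk E W'" and qu: "{u, q} \<in> E"
    using W(1) W' is_walk_append[of E B q "[u]"] by (simp_all add: insert_commute)
  \<comment> \<open>A second neighbour y of u is reached from v by a walk avoiding u (u is farthest
    from v); returning from q to v along W and going on to y closes a cycle through u.\<close>
  have "y = q" if uy: "{u, y} \<in> E" for y
  proof (rule ccontr)
    assume "y \<noteq> q"
    have "y \<in> P"
      using edges uy by blast
    have "y \<noteq> u"
      using loops uy by (metis insert_absorb2)
    obtain Q where Q: "is_walk E Q" "hd Q = v" "last Q = y" "length Q \<le> m + 1"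
      using reach[OF \<open>y \<in> P\<close>] unfolding dist_le_def by blast
    define R where "R = rev W' @ tl Q"
    have "last (rev W') = hd Q"
      using Q(2) W(3) W' Bq by (cases B) (simp_all add: last_rev)
    then have "is_walk E R" "hd R = q" "last R = y" "set R \<subseteq> set W' \<union> set Q"
      using is_walk_join[OF is_walk_rev[OF walk_W'] Q(1)] Q(3) Bq unfolding R_def by auto
    moreover have "u \<notin> set W'" "u \<notin> set Q"
      using W(2) W' not_inner_of_short_walk[OF Q(1,2)] Q(3,4) \<open>y \<noteq> u\<close>
      unfolding m_def by auto
    ultimately show False
      using acyclic_no_detour[OF acyclic qu uy \<open>y \<noteq> q\<close>[symmetric]] by blast
  qed
  then show thesis
    using qu that unfolding leaf_def by blast
qed

lemma diameter_leaves:
  assumes acyclic: "\<not> has_cycle E"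
    and edges: "\<Union>E \<subseteq> P" and loops: "\<forall>a. {a} \<notin> E"
    and conn: "connected_graph P E" and "finite P" and "\<not> diam_le P E k"
  obtains u v x y where "u \<in> P" "v \<in> P" "\<not> dist_le E u v k" "leaf E u x" "leaf E v y"
proof -
  have reach: "dist_le E a b (graph_dist E a b)" if "a \<in> P" "b \<in> P" for a b
    using conn that dist_le_graph_dist unfolding connected_graph_def by blast
  have sym: "graph_dist E a b = graph_dist E b a" if "a \<in> P" "b \<in> P" for a b
    using reach[OF that] graph_dist_sym by blast
  obtain a b where ab: "a \<in> P" "b \<in> P" "\<not> dist_le E a b k"
    using assms(6) unfolding diam_le_def by blast
  let ?f = "\<lambda>(a, b). graph_dist E a b"
  have "finite (?f ` (P \<times> P))" "?f ` (P \<times> P) \<noteq> {}"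
    using \<open>finite P\<close> ab by auto
  then have "Max (?f ` (P \<times> P)) \<in> ?f ` (P \<times> P)"
    by (rule Max_in)
  then obtain u v where uv: "u \<in> P" "v \<in> P" "graph_dist E u v = Max (?f ` (P \<times> P))"
    by auto
  have max: "graph_dist E c d \<le> graph_dist E u v" if "c \<in> P" "d \<in> P" for c d
  proof -
    have "?f (c, d) \<le> Max (?f ` (P \<times> P))"
      by (rule Max_ge) (use that \<open>finite P\<close> in auto)
    then show ?thesis
      using uv(3) by simp
  qed
  have far: "\<not> dist_le E u v k"
    using ab max[OF ab(1,2)] reach[OF ab(1,2)] graph_dist_le dist_le_mono by (meson order.trans)
  then have "u \<noteq> v"
    by auto
  have ecc_v: "graph_dist E v z \<le> graph_dist E v u" if "z \<in> P" for z
    using max[OF uv(2) that] sym[OF uv(1,2)] by simp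
  obtain x where "leaf E u x"
    by (rule eccentric_vertex_leaf[OF acyclic edges loops conn uv(1,2) \<open>u \<noteq> v\<close> ecc_v])
  moreover obtain y where "leaf E v y"
    by (rule eccentric_vertex_leaf[OF acyclic edges loops conn uv(2,1) \<open>u \<noteq> v\<close>[symmetric]
          max[OF uv(1)]])
  ultimately show thesis
    using that uv(1,2) far by blast
qed

lemma finite_players: "finite (players n)"
  by (simp add: players_def)

lemma edge_outcome:
  "{a, b} \<in> outcome n S \<longleftrightarrow> a \<in> players n \<and> b \<in> players n \<and> (a \<in> S b \<or> b \<in> S a)"
  unfolding outcome_def by (auto simp: doubleton_eq_iff)

lemma outcome_mono: "(\<And>x. S x \<subseteq> S' x) \<Longrightarrow> outcome n S \<subseteq> outcome n S'"
  unfolding outcome_def by blast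

lemma outcome_loop_free: "strategy_profile n S \<Longrightarrow> {a} \<notin> outcome n S"
  using edge_outcome[of a a n S] unfolding strategy_profile_def by auto

lemma leaf_strategy:
  assumes "strategy_profile n S" "leaf (outcome n S) u x" "u \<notin> S x"
  shows "S u = {x}"
proof -
  have "u \<in> players n" "x \<in> S u"
    using assms(2,3) unfolding leaf_def edge_outcome by auto
  moreover have "y = x" if "y \<in> S u" for y
    using assms(1,2) that \<open>u \<in> players n\<close> unfolding leaf_def strategy_profile_def edge_outcome
    by blast
  ultimately show ?thesis
    by blast
qed

lemma dist_le_outcome_avoiding_leaf:
  assumes "dist_le (outcome n S) a t k" "leaf (outcome n S) u x" "a \<noteq> u" "t \<noteq> u"
    and "\<And>y. y \<noteq> u \<Longrightarrow> S y - {u} \<subseteq> S' y"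
  shows "dist_le (outcome n S') a t k"
proof (rule dist_le_avoiding_leaf[OF assms(1-4)])
  fix b c assume "{b, c} \<in> outcome n S" "b \<noteq> u" "c \<noteq> u"
  then show "{b, c} \<in> outcome n S'"
    using assms(5) unfolding edge_outcome by blast
qed

definition far_players :: "nat \<Rightarrow> nat set set \<Rightarrow> nat \<Rightarrow> nat \<Rightarrow> nat set" where
  "far_players n E k u = {t \<in> players n. \<not> dist_le E u t k}"

lemma finite_far_players: "finite (far_players n E k u)"
  unfolding far_players_def using finite_players by simp

lemma nash_eq_deviation:
  assumes "nash_eq n w \<alpha> \<beta> S" "u \<in> players n" "X \<subseteq> players n - {u}"
  shows "\<alpha> * card (S u) + sum w (far_players n (outcome n S) \<beta> u)
    \<le> \<alpha> * card X + sum w (far_players n (outcome n (S(u := X))) \<beta> u)"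
  using assms unfolding nash_eq_def cost_def far_players_def by fastforce

lemma sum_players_mono:
  fixes w :: "nat \<Rightarrow> real"
  assumes "\<forall>t\<in>players n. 0 \<le> w t" "A \<subseteq> B" "B \<subseteq> players n"
  shows "sum w A \<le> sum w B"
proof (rule sum_mono2)
  show "finite B"
    using assms(3) finite_players finite_subset by blast
  show "0 \<le> w b" if "b \<in> B - A" for b
    using assms(1,3) that by blast
qed (rule assms(2))

lemma far_players_neighbour_of_leaf:
  assumes "leaf E u x" "1 \<le> k"
  shows "far_players n E k x \<subseteq> far_players n E (Suc k) u"
proof -
  have "dist_le E x t k" if "dist_le E u t (Suc k)" for t
  proof (cases "t = u")
    case True
    have "{x, u} \<in> E"
      using assms(1) unfolding leaf_def by (simp add: insert_commute)
    then show ?thesis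
      using dist_le_edge dist_le_mono assms(2) True by fastforce
  next
    case False
    then show ?thesis
      using dist_le_from_leaf that assms(1) by blast
  qed
  then show ?thesis
    unfolding far_players_def by blast
qed

lemma far_players_link_to_leaf:
  assumes "leaf (outcome n S) u x" "v \<in> players n" "2 \<le> \<beta>"
  shows "far_players n (outcome n (S(v := insert u (S v)))) \<beta> v
    \<subseteq> far_players n (outcome n S) \<beta> v - {u, x}"
proof -
  let ?G' = "outcome n (S(v := insert u (S v)))"
  have GG': "outcome n S \<subseteq> ?G'"
    by (rule outcome_mono) auto
  have vu: "{v, u} \<in> ?G'"
    using assms(1,2) unfolding leaf_def edge_outcome by simp
  moreover have "{u, x} \<in> ?G'"
    using assms(1) GG' unfolding leaf_def by blast
  ultimately have "dist_le ?G' v x (Suc (Suc 0))"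
    using dist_le_Cons_edge[OF vu dist_le_edge] by blast
  then have "dist_le ?G' v x \<beta>" "dist_le ?G' v u \<beta>"
    using dist_le_mono assms(3) dist_le_edge[OF vu] by auto
  then show ?thesis
    using dist_le_subset[OF _ GG'] unfolding far_players_def by blast
qed

lemma far_players_rehang_leaf:
  assumes "leaf (outcome n S) u x" "y \<in> players n" "y \<noteq> u"
  shows "far_players n (outcome n (S(u := {y}))) (Suc k) u
    \<subseteq> far_players n (outcome n S) k y - {u}"
proof -
  let ?G' = "outcome n (S(u := {y}))"
  have "dist_le ?G' u t (Suc k)" if "dist_le (outcome n S) y t k" "t \<noteq> u" for t
  proof -
    have "dist_le ?G' y t k"
      by (rule dist_le_outcome_avoiding_leaf[OF that(1) assms(1) assms(3) that(2)]) simp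
    moreover have "{u, y} \<in> ?G'"
      using assms(1,2) unfolding leaf_def edge_outcome by simp
    ultimately show ?thesis
      using dist_le_Cons_edge by blast
  qed
  then show ?thesis
    using dist_le_refl[of ?G' u "Suc k"] unfolding far_players_def by blast
qed

lemma leaf_owner_weight:
  assumes NE: "nash_eq n w \<alpha> \<beta> S" and nonneg: "\<forall>t\<in>players n. 0 \<le> w t"
    and leaf: "leaf (outcome n S) u x" and owner: "u \<in> S x"
  shows "\<alpha> \<le> w u"
proof -
  define S' where "S' = S(x := S x - {u})"
  define far where "far = far_players n (outcome n S) \<beta> x"
  define far' where "far' = far_players n (outcome n S') \<beta> x"
  have prof: "strategy_profile n S"
    using NE unfolding nash_eq_def by blast
  have "u \<in> players n" "x \<in> players n"
    using leaf unfolding leaf_def edge_outcome by auto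
  have "S x \<subseteq> players n - {x}"
    using prof \<open>x \<in> players n\<close> unfolding strategy_profile_def by blast
  then have "x \<noteq> u" "finite (S x)"
    using owner finite_subset[OF _ finite_players] by auto
  have "dist_le (outcome n S') x t \<beta>" if "dist_le (outcome n S) x t \<beta>" "t \<noteq> u" for t
    by (rule dist_le_outcome_avoiding_leaf[OF that(1) leaf \<open>x \<noteq> u\<close> that(2)]) (simp add: S'_def)
  then have far'_sub: "far' \<subseteq> insert u far"
    unfolding far_def far'_def far_players_def by blast
  have "insert u far \<subseteq> players n"
    using \<open>u \<in> players n\<close> unfolding far_def far_players_def by blast
  then have "sum w far' \<le> sum w (insert u far)"
    by (rule sum_players_mono[OF nonneg far'_sub])
  also have "\<dots> \<le> w u + sum w far"
  proof -
    have "0 \<le> w u"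
      using nonneg \<open>u \<in> players n\<close> by blast
    then show ?thesis
      using finite_far_players[of n "outcome n S" \<beta> x] unfolding far_def by (simp add: sum.insert_if)
  qed
  finally have "sum w far' \<le> w u + sum w far" .
  moreover have "\<alpha> * card (S x) + sum w far \<le> \<alpha> * card (S x - {u}) + sum w far'"
    unfolding far_def far'_def S'_def
    by (rule nash_eq_deviation[OF NE \<open>x \<in> players n\<close>]) (use \<open>S x \<subseteq> players n - {x}\<close> in blast)
  moreover have "card (S x - {u}) = card (S x) - 1" "card (S x) \<ge> 1"
    using owner \<open>finite (S x)\<close> by (simp, metis One_nat_def Suc_leI card_gt_0_iff empty_iff)
  then have "\<alpha> * card (S x - {u}) = \<alpha> * card (S x) - \<alpha>"
    by (simp add: of_nat_diff right_diff_distrib)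
  ultimately show ?thesis
    by linarith
qed

lemma link_to_far_leaf_weight:
  assumes NE: "nash_eq n w \<alpha> \<beta> S" and nonneg: "\<forall>t\<in>players n. 0 \<le> w t"
    and "2 \<le> \<beta>" and leaf: "leaf (outcome n S) u x" and "v \<in> players n"
    and far: "\<not> dist_le (outcome n S) u v (Suc \<beta>)"
  shows "w u + w x \<le> \<alpha>"
proof -
  define G where "G = outcome n S"
  define far where "far = far_players n G \<beta> v"
  define far' where "far' = far_players n (outcome n (S(v := insert u (S v)))) \<beta> v"
  have ux: "{u, x} \<in> G" "u \<in> players n" "x \<in> players n"
    using leaf unfolding G_def leaf_def edge_outcome by auto
  have far_G: "\<not> dist_le G u v k" if "k \<le> Suc \<beta>" for k
    using far dist_le_mono[OF _ that] unfolding G_def by blast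
  have "u \<notin> S v"
    using far_G[of "Suc 0"] dist_le_edge[of u v G] ux(2) \<open>v \<in> players n\<close>
    unfolding G_def edge_outcome by auto
  have prof: "strategy_profile n S"
    using NE unfolding nash_eq_def by blast
  then have "S v \<subseteq> players n - {v}"
    using \<open>v \<in> players n\<close> unfolding strategy_profile_def by blast
  moreover have "u \<noteq> v"
    using far_G[of 0] by auto
  ultimately have "insert u (S v) \<subseteq> players n - {v}" and "finite (S v)"
    using ux(2) finite_subset[OF _ finite_players] by auto
  have "far' \<subseteq> far - {u, x}"
    using far_players_link_to_leaf[OF leaf \<open>v \<in> players n\<close> \<open>2 \<le> \<beta>\<close>]
    unfolding far_def far'_def G_def .
  then have "sum w far' \<le> sum w (far - {u, x})"
    by (rule sum_players_mono[OF nonneg]) (auto simp: far_def far_players_def)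
  also have "\<dots> = sum w far - (w u + w x)"
  proof -
    have "\<not> dist_le G v u \<beta>"
      using far_G[of \<beta>] dist_le_sym by auto
    moreover have "\<not> dist_le G v x \<beta>"
      using far_G[of "Suc \<beta>"] dist_le_sym dist_le_Cons_edge[OF ux(1)] by blast
    moreover have "x \<noteq> u"
      using outcome_loop_free[OF prof] ux(1) unfolding G_def by auto
    ultimately show ?thesis
      using ux(2,3) finite_far_players by (simp add: sum_diff far_def far_players_def)
  qed
  finally have "sum w far' \<le> sum w far - (w u + w x)" .
  moreover have "\<alpha> * card (S v) + sum w far \<le> \<alpha> * card (insert u (S v)) + sum w far'"
    unfolding far_def far'_def G_def
    by (rule nash_eq_deviation[OF NE \<open>v \<in> players n\<close>]) fact
  moreover have "\<alpha> * card (insert u (S v)) = \<alpha> * card (S v) + \<alpha>"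
    using \<open>u \<notin> S v\<close> \<open>finite (S v)\<close> by (simp add: distrib_left)
  ultimately show ?thesis
    by linarith
qed

lemma leaf_swap_weight:
  assumes NE: "nash_eq n w \<alpha> (Suc k) S" and nonneg: "\<forall>t\<in>players n. 0 \<le> w t"
    and "1 \<le> k" and leaf: "leaf (outcome n S) u x" and Su: "S u = {x}"
    and vy: "{v, y} \<in> outcome n S" and far: "\<not> dist_le (outcome n S) u v (Suc (Suc k))"
  shows "sum w (far_players n (outcome n S) k x) + w u \<le> sum w (far_players n (outcome n S) k y)"
proof -
  define G where "G = outcome n S"
  have "u \<in> players n" "y \<in> players n"
    using leaf vy unfolding leaf_def edge_outcome by auto
  have far_G: "\<not> dist_le G u v j" if "j \<le> Suc (Suc k)" for j
    using far dist_le_mono[OF _ that] unfolding G_def by blast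
  have "y \<noteq> u"
  proof
    assume "y = u"
    then have "{u, v} \<in> G"
      using vy by (simp add: G_def insert_commute)
    then show False
      using far_G[of "Suc 0"] dist_le_edge by auto
  qed
  have "sum w (far_players n G k x) \<le> sum w (far_players n G (Suc k) u)"
    using far_players_neighbour_of_leaf[OF leaf[folded G_def] \<open>1 \<le> k\<close>]
    by (rule sum_players_mono[OF nonneg]) (auto simp: far_players_def)
  also have "\<dots> \<le> sum w (far_players n (outcome n (S(u := {y}))) (Suc k) u)"
    using nash_eq_deviation[OF NE \<open>u \<in> players n\<close>, of "{y}"] \<open>y \<in> players n\<close> \<open>y \<noteq> u\<close>
    unfolding G_def Su by simp
  also have "\<dots> \<le> sum w (far_players n G k y - {u})"
    using far_players_rehang_leaf[OF leaf \<open>y \<in> players n\<close> \<open>y \<noteq> u\<close>, of k, folded G_def]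
    by (rule sum_players_mono[OF nonneg]) (auto simp: far_players_def)
  also have "\<dots> = sum w (far_players n G k y) - w u"
  proof -
    have "\<not> dist_le G y u k"
      using far_G[of "Suc k"] dist_le_sym dist_le_Cons_edge[OF vy[folded G_def]] by auto
    then show ?thesis
      using \<open>u \<in> players n\<close> finite_far_players by (simp add: sum_diff1 far_players_def)
  qed
  finally show ?thesis
    unfolding G_def by simp
qed

lemma far_leaf_buys_its_edge:
  assumes NE: "nash_eq n w \<alpha> \<beta> S" and pos: "\<forall>t\<in>players n. 0 < w t"
    and "2 \<le> \<beta>" and leaf: "leaf (outcome n S) u x" and "v \<in> players n"
    and far: "\<not> dist_le (outcome n S) u v (Suc \<beta>)"
  shows "S u = {x}"
proof -
  have nonneg: "\<forall>t\<in>players n. 0 \<le> w t"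
    using pos by (simp add: less_imp_le)
  have "u \<notin> S x"
  proof
    assume "u \<in> S x"
    then have "\<alpha> \<le> w u"
      by (rule leaf_owner_weight[OF NE nonneg leaf])
    moreover have "w u + w x \<le> \<alpha>"
      by (rule link_to_far_leaf_weight[OF NE nonneg \<open>2 \<le> \<beta>\<close> leaf \<open>v \<in> players n\<close> far])
    moreover have "x \<in> players n"
      using leaf unfolding leaf_def edge_outcome by simp
    then have "0 < w x"
      using pos by blast
    ultimately show False
      by linarith
  qed
  moreover have "strategy_profile n S"
    using NE unfolding nash_eq_def by blast
  ultimately show ?thesis
    using leaf_strategy leaf by blast
qed

theorem proposition9:
  fixes n :: nat and w :: "nat \<Rightarrow> real" and \<alpha> :: real and \<beta> :: nat and T :: "nat set set"
  assumes "star_celebrity_game n w \<alpha> \<beta>"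
    and "\<beta> > 1"
    and "NE_graph n w \<alpha> \<beta> T"
    and "is_tree (players n) T"
  shows "diam_le (players n) T (\<beta> + 1)"
proof (rule ccontr)
  assume long: "\<not> diam_le (players n) T (\<beta> + 1)"
  obtain S where NE: "nash_eq n w \<alpha> \<beta> S" and T: "T = outcome n S"
    using assms(3) unfolding NE_graph_def by blast
  obtain k where \<beta>: "\<beta> = Suc k" and "1 \<le> k"
    using assms(2) by (cases \<beta>) auto
  have pos: "\<forall>t\<in>players n. 0 < w t"
    using assms(1) unfolding star_celebrity_game_def celebrity_game_def by blast
  then have nonneg: "\<forall>t\<in>players n. 0 \<le> w t"
    by (simp add: less_imp_le)
  have prof: "strategy_profile n S"
    using NE unfolding nash_eq_def by blast
  have edges: "\<Union>T \<subseteq> players n"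
    unfolding T outcome_def by blast
  have loops: "\<forall>a. {a} \<notin> T"
    using outcome_loop_free[OF prof] unfolding T by blast
  obtain u v x y where "u \<in> players n" "v \<in> players n" "\<not> dist_le T u v (\<beta> + 1)"
    and leaves: "leaf (outcome n S) u x" "leaf (outcome n S) v y"
    using diameter_leaves[OF _ edges loops _ finite_players long] assms(4)
    unfolding is_tree_def T by blast
  then have far: "\<not> dist_le (outcome n S) u v (Suc \<beta>)" "\<not> dist_le (outcome n S) v u (Suc \<beta>)"
    using dist_le_sym unfolding T by auto
  have "2 \<le> \<beta>"
    using assms(2) by simp
  have "S u = {x}" "S v = {y}"
    using far_leaf_buys_its_edge[OF NE pos \<open>2 \<le> \<beta>\<close>] leaves far \<open>u \<in> players n\<close> \<open>v \<in> players n\<close>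
    by blast+
  then have "sum w (far_players n T k x) + w u \<le> sum w (far_players n T k y)"
    "sum w (far_players n T k y) + w v \<le> sum w (far_players n T k x)"
    using leaf_swap_weight[OF NE[unfolded \<beta>] nonneg \<open>1 \<le> k\<close>] leaves far[unfolded \<beta>]
    unfolding T leaf_def by blast+
  moreover have "0 < w u" "0 < w v"
    using pos \<open>u \<in> players n\<close> \<open>v \<in> players n\<close> by blast+
  ultimately show False
    by linarith
qed

end
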